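(* Fix $\alpha,\beta\in(0,1)$ and $c>0$. There exist constants $K,c_1,c_2>0$ depending only on $\alpha,\beta,c$ such that the following holds for the decoupled process with parameters $(G,r,T,\alpha,\beta)$ at any time $t>0$. Let $u,v$ be nodes with $d_G(r,u),d_G(r,v)\le t$, let $w$ be their least common ancestor in $T$ (a common ancestor, possibly $u$ or $v$ itself, of maximal depth), $D=d_T(r,w)$, and $\delta=\max\{d_T(w,u),d_T(w,v)\}$. If $\delta>\beta(t-D)+K(t-D)^{0.5+c}$, then $$\Pr[\mathrm{origin}_t(u)=\mathrm{origin}_t(v)]\le e^{-c_1(t-D)^{c_2}}.$$
   Context: Decoupled process. Fix $\alpha,\beta\in[0,1]$, a connected locally finite undirected graph $G$, root $r$, and a BFS spanning tree $T$ of $G$ rooted at $r$ ($d_T(r,v)=d_G(r,v)$), oriented away from $r$, with parent map $p$. Let $Z_0=+1$, $Z_1,Z_2,\dots$ i.i.d. uniform on $\{-1,+1\}$, $Z_\infty=\bot$. Counter $\mathrm{count}_0=1$; $\mathrm{origin}_0(r)=0$ (and always $0$), $\mathrm{origin}_0(v)=\infty$ for $v\ne r$; $g_t(v)=Z_{\mathrm{origin}_t(v)}$. Update from $t$ to $t+1$ (independent choices): if $g_t(v)=g_t(p(v))=\bot$ then $\mathrm{origin}_{t+1}(v)=\infty$; nodes with $g_t(v)=\bot\ne g_t(p(v))$ are processed sequentially in a fixed order: w.p. $1-\alpha$, $\mathrm{origin}_{t+1}(v)=\mathrm{origin}_t(p(v))$; w.p. $\alpha$, $\mathrm{origin}_{t+1}(v)$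 is the current counter value and the counter is then incremented; if $g_t(v)\ne\bot$, $v\ne r$: w.p. $\beta$, $\mathrm{origin}_{t+1}(v)=\mathrm{origin}_t(p(v))$, otherwise unchanged. Nodes $u,v$ are in the same run at time $t$ iff $\mathrm{origin}_t(u)=\mathrm{origin}_t(v)$. *)

theory Defs
  imports "HOL-Probability.Probability"
begin

definition ugraph :: "nat set \<Rightarrow> (nat \<Rightarrow> nat \<Rightarrow> bool) \<Rightarrow> bool" where
  "ugraph V E \<longleftrightarrow> (\<forall>x y. E x y \<longrightarrow> x \<in> V \<and> y \<in> V \<and> E y x \<and> x \<noteq> y)"

definition locally_finite :: "nat set \<Rightarrow> (nat \<Rightarrow> nat \<Rightarrow> bool) \<Rightarrow> bool" where
  "locally_finite V E \<longleftrightarrow> (\<forall>x\<in>V. finite {y. E x y})"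

definition gwalk :: "(nat \<Rightarrow> nat \<Rightarrow> bool) \<Rightarrow> nat \<Rightarrow> nat \<Rightarrow> nat \<Rightarrow> bool" where
  "gwalk E n x y \<longleftrightarrow> (\<exists>f. f 0 = x \<and> f n = y \<and> (\<forall>i<n. E (f i) (f (Suc i))))"

definition gconnected :: "nat set \<Rightarrow> (nat \<Rightarrow> nat \<Rightarrow> bool) \<Rightarrow> bool" where
  "gconnected V E \<longleftrightarrow> V \<noteq> {} \<and> (\<forall>x\<in>V. \<forall>y\<in>V. \<exists>n. gwalk E n x y)"

definition gdist :: "(nat \<Rightarrow> nat \<Rightarrow> bool) \<Rightarrow> nat \<Rightarrow> nat \<Rightarrow> nat" where
  "gdist E x y = (LEAST n. gwalk E n x y)"

definition tdepth :: "(nat \<Rightarrow> nat) \<Rightarrow> nat \<Rightarrow> nat \<Rightarrow> nat" where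
  "tdepth p r v = (LEAST k. (p ^^ k) v = r)"

definition tanc :: "(nat \<Rightarrow> nat) \<Rightarrow> nat \<Rightarrow> nat \<Rightarrow> nat \<Rightarrow> bool" where
  "tanc p r a x \<longleftrightarrow> (\<exists>k\<le>tdepth p r x. (p ^^ k) x = a)"

definition bfs_tree :: "nat set \<Rightarrow> (nat \<Rightarrow> nat \<Rightarrow> bool) \<Rightarrow> nat \<Rightarrow> (nat \<Rightarrow> nat) \<Rightarrow> bool" where
  "bfs_tree V E r p \<longleftrightarrow> r \<in> V
     \<and> (\<forall>v\<in>V. v \<noteq> r \<longrightarrow> p v \<in> V \<and> E (p v) v)
     \<and> (\<forall>v\<in>V. \<exists>k. (p ^^ k) v = r)
     \<and> (\<forall>v\<in>V. tdepth p r v = gdist E r v)"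

text \<open>Randomness: for each time t and node v an independent pair of coins
  (a, b) with a ~ Bernoulli(alpha), b ~ Bernoulli(beta). Coin a decides "fresh origin"
  (probability alpha) for a bottom node with non-bottom parent; coin b decides
  "copy parent's origin" (probability beta) for a non-bottom non-root node.
  origin = None encodes infinity (g = bottom); the Z values are irrelevant for origins.\<close>
definition coin_space :: "real \<Rightarrow> real \<Rightarrow> (nat \<times> nat \<Rightarrow> bool \<times> bool) measure" where
  "coin_space \<alpha> \<beta> = PiM UNIV (\<lambda>_. measure_pmf (pair_pmf (bernoulli_pmf \<alpha>) (bernoulli_pmf \<beta>)))"

text \<open>One step from time t to t+1. State = (origin map, counter). Fresh origins are
  handed out in the fixed processing order given by rk.\<close>
definition dstep :: "nat set \<Rightarrow> nat \<Rightarrow> (nat \<Rightarrow> nat) \<Rightarrow> (nat \<Rightarrow> nat) \<Rightarrow> (nat \<Rightarrow> bool \<times> bool)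
     \<Rightarrow> (nat \<Rightarrow> nat option) \<times> nat \<Rightarrow> (nat \<Rightarrow> nat option) \<times> nat" where
  "dstep V r p rk co st =
    (let orig = fst st; cnt = snd st;
         N = {v \<in> V. v \<noteq> r \<and> orig v = None \<and> orig (p v) \<noteq> None \<and> fst (co v)}
     in ((\<lambda>v. if v \<notin> V then None
              else if v = r then Some 0
              else if orig v = None then
                (if orig (p v) = None then None
                 else if fst (co v) then Some (cnt + card {w \<in> N. rk w < rk v})
                 else orig (p v))
              else (if snd (co v) then orig (p v) else orig v)),
         cnt + card N))"

primrec dproc :: "nat set \<Rightarrow> nat \<Rightarrow> (nat \<Rightarrow> nat) \<Rightarrow> (nat \<Rightarrow> nat) \<Rightarrow> (nat \<times> nat \<Rightarrow> bool \<times> bool)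
     \<Rightarrow> nat \<Rightarrow> (nat \<Rightarrow> nat option) \<times> nat" where
  "dproc V r p rk \<omega> 0 = ((\<lambda>v. if v = r then Some 0 else None), 1)"
| "dproc V r p rk \<omega> (Suc t) = dstep V r p rk (\<lambda>x. \<omega> (t, x)) (dproc V r p rk \<omega> t)"

definition origin :: "nat set \<Rightarrow> nat \<Rightarrow> (nat \<Rightarrow> nat) \<Rightarrow> (nat \<Rightarrow> nat) \<Rightarrow> (nat \<times> nat \<Rightarrow> bool \<times> bool)
     \<Rightarrow> nat \<Rightarrow> nat \<Rightarrow> nat option" where
  "origin V r p rk \<omega> t v = fst (dproc V r p rk \<omega> t) v"

end

theory Submission
  imports Defs
begin

text \<open>A fresh origin created at a node \<open>a\<close> is only ever copied from parents to children, so it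
  stays in the subtree of \<open>a\<close>. Hence if \<open>u\<close> and \<open>v\<close> share their origin at time \<open>t\<close>, the origin
  of the deeper one, say \<open>u\<close>, was copied down from depth \<open>D\<close> of the least common ancestor
  without any fresh creation on the way. Each of the \<open>d(u) - D\<close> levels has to be crossed by a
  copy step (probability \<open>\<beta>\<close> per time step) and every node on the way must be born without a
  fresh origin (probability \<open>1 - \<alpha>\<close>). An exponential potential \<open>q ^ gap * M ^ slack\<close> with
  \<open>q = 1/(1+e)\<close>, \<open>M = 1/(1 - e \<beta>/(1-\<beta>))\<close> and \<open>e \<approx> (t - D) powr (c - 1/2)\<close> turns this into
  the bound \<open>exp (- \<eta> (t - D) powr (2c))\<close> as soon as the gap exceeds
  \<open>\<beta> (t - D) + K (t - D) powr (1/2 + c)\<close>.\<close>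

lemma tdepth_root: "tdepth p r r = 0"
  unfolding tdepth_def by (rule Least_eq_0) simp

lemma tanc_refl: "tanc p r x x"
  unfolding tanc_def by (rule exI[of _ 0]) simp

locale bfs_spanning_tree =
  fixes V :: "nat set" and E :: "nat \<Rightarrow> nat \<Rightarrow> bool" and r :: nat and p :: "nat \<Rightarrow> nat"
  assumes bfs_tree: "bfs_tree V E r p"
begin

abbreviation depth :: "nat \<Rightarrow> nat" where "depth \<equiv> tdepth p r"

lemma root_in_V: "r \<in> V"
  using bfs_tree by (simp add: bfs_tree_def)

lemma parent_in_V: "y \<in> V \<Longrightarrow> y \<noteq> r \<Longrightarrow> p y \<in> V"
  using bfs_tree by (simp add: bfs_tree_def)

lemma edge_parent: "y \<in> V \<Longrightarrow> y \<noteq> r \<Longrightarrow> E (p y) y"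
  using bfs_tree by (simp add: bfs_tree_def)

lemma depth_eq_gdist: "y \<in> V \<Longrightarrow> depth y = gdist E r y"
  using bfs_tree by (simp add: bfs_tree_def)

lemma funpow_parent_depth: "y \<in> V \<Longrightarrow> (p ^^ depth y) y = r"
  unfolding tdepth_def using bfs_tree by (auto simp: bfs_tree_def intro: LeastI_ex)

lemma depth_eq_0_iff: "y \<in> V \<Longrightarrow> depth y = 0 \<longleftrightarrow> y = r"
  using funpow_parent_depth[of y] tdepth_root[of p r] by auto

lemma depth_eq_Suc_depth_parent:
  assumes "y \<in> V" "y \<noteq> r"
  shows "depth y = Suc (depth (p y))"
proof -
  have pos: "depth y \<ge> 1" using depth_eq_0_iff assms by fastforce
  have "(p ^^ (depth y - 1)) (p y) = r"
    using funpow_parent_depth[OF assms(1)] pos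
    by (metis Suc_diff_le diff_Suc_1 funpow_Suc_right o_apply)
  hence "depth (p y) \<le> depth y - 1" unfolding tdepth_def by (rule Least_le)
  moreover have "(p ^^ Suc (depth (p y))) y = r"
    using funpow_parent_depth[OF parent_in_V[OF assms]]
    by (simp add: funpow_Suc_right del: funpow.simps)
  hence "depth y \<le> Suc (depth (p y))" unfolding tdepth_def by (rule Least_le)
  ultimately show ?thesis using pos by linarith
qed

lemma tanc_parent:
  assumes "y \<in> V" "y \<noteq> r" "tanc p r a (p y)"
  shows "tanc p r a y"
proof -
  obtain k where "k \<le> depth (p y)" "(p ^^ k) (p y) = a"
    using assms(3) unfolding tanc_def by auto
  hence "Suc k \<le> depth y" "(p ^^ Suc k) y = a"
    using depth_eq_Suc_depth_parent[OF assms(1,2)] by (auto simp: funpow_Suc_right simp del: funpow.simps)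
  thus ?thesis unfolding tanc_def by blast
qed

lemma tanc_depth_le:
  assumes "x \<in> V" "tanc p r a x"
  shows "depth a \<le> depth x"
proof -
  obtain k where k: "k \<le> depth x" "(p ^^ k) x = a"
    using assms(2) unfolding tanc_def by auto
  have "(p ^^ (depth x - k)) a = r"
    using funpow_parent_depth[OF assms(1)] k by (metis funpow_add le_add_diff_inverse2 o_apply)
  hence "depth a \<le> depth x - k" unfolding tdepth_def by (rule Least_le)
  thus ?thesis by linarith
qed

lemma finite_level:
  assumes "locally_finite V E"
  shows "finite {y \<in> V. depth y = k}"
proof (induction k)
  case 0
  have "{y \<in> V. depth y = 0} \<subseteq> {r}" using depth_eq_0_iff by auto
  thus ?case using finite_subset by blast
next
  case (Suc k)
  have "{y \<in> V. depth y = Suc k} \<subseteq> (\<Union>x\<in>{y \<in> V. depth y = k}. {y. E x y})"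
  proof
    fix y assume y: "y \<in> {y \<in> V. depth y = Suc k}"
    hence "y \<noteq> r" using tdepth_root by auto
    thus "y \<in> (\<Union>x\<in>{y \<in> V. depth y = k}. {y. E x y})"
      using y parent_in_V edge_parent depth_eq_Suc_depth_parent by (intro UN_I[of "p y"]) auto
  qed
  moreover have "finite (\<Union>x\<in>{y \<in> V. depth y = k}. {y. E x y})"
    using Suc assms unfolding locally_finite_def by auto
  ultimately show ?case using finite_subset by blast
qed

end

section \<open>The decoupled process\<close>

definition fresh_nodes ::
    "nat set \<Rightarrow> nat \<Rightarrow> (nat \<Rightarrow> nat) \<Rightarrow> (nat \<Rightarrow> nat) \<Rightarrow> (nat \<times> nat \<Rightarrow> bool \<times> bool) \<Rightarrow> nat \<Rightarrow> nat set"
  where "fresh_nodes V r p rk \<omega> s =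
    {v \<in> V. v \<noteq> r \<and> origin V r p rk \<omega> s v = None \<and> origin V r p rk \<omega> s (p v) \<noteq> None \<and> fst (\<omega> (s, v))}"

abbreviation counter ::
    "nat set \<Rightarrow> nat \<Rightarrow> (nat \<Rightarrow> nat) \<Rightarrow> (nat \<Rightarrow> nat) \<Rightarrow> (nat \<times> nat \<Rightarrow> bool \<times> bool) \<Rightarrow> nat \<Rightarrow> nat"
  where "counter V r p rk \<omega> s \<equiv> snd (dproc V r p rk \<omega> s)"

lemma origin_0: "origin V r p rk \<omega> 0 v = (if v = r then Some 0 else None)"
  by (simp add: origin_def)

lemma origin_Suc: "origin V r p rk \<omega> (Suc s) v =
  (if v \<notin> V then None else if v = r then Some 0
   else if origin V r p rk \<omega> s v = None then
     (if origin V r p rk \<omega> s (p v) = None then None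
      else if fst (\<omega> (s, v))
        then Some (counter V r p rk \<omega> s + card {w \<in> fresh_nodes V r p rk \<omega> s. rk w < rk v})
      else origin V r p rk \<omega> s (p v))
   else if snd (\<omega> (s, v)) then origin V r p rk \<omega> s (p v) else origin V r p rk \<omega> s v)"
  by (simp add: origin_def dstep_def Let_def fresh_nodes_def)

lemma counter_Suc:
  "counter V r p rk \<omega> (Suc s) = counter V r p rk \<omega> s + card (fresh_nodes V r p rk \<omega> s)"
  by (simp add: origin_def dstep_def Let_def fresh_nodes_def)

lemma counter_mono: "s \<le> s' \<Longrightarrow> counter V r p rk \<omega> s \<le> counter V r p rk \<omega> s'"
proof (induction s' rule: dec_induct)
  case (step n) thus ?case using counter_Suc[of V r p rk \<omega> n] by linarith
qed simp

lemma counter_pos: "0 < counter V r p rk \<omega> s"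
  using counter_mono[of 0 s V r p rk \<omega>] by simp

locale decoupled_process = bfs_spanning_tree +
  fixes rk :: "nat \<Rightarrow> nat"
  assumes locally_finite: "locally_finite V E" and inj_rk: "inj_on rk V"
begin

abbreviation orig where "orig \<equiv> origin V r p rk"
abbreviation fresh where "fresh \<equiv> fresh_nodes V r p rk"
abbreviation cnt where "cnt \<equiv> counter V r p rk"

lemma origin_defined_iff: "orig \<omega> s y \<noteq> None \<longleftrightarrow> y \<in> V \<and> depth y \<le> s"
proof (induction s arbitrary: y)
  case 0
  show ?case using depth_eq_0_iff root_in_V by (auto simp: origin_0)
next
  case (Suc s)
  show ?case
  proof (cases "y \<in> V \<and> y \<noteq> r")
    case False thus ?thesis using tdepth_root root_in_V by (auto simp: origin_Suc)
  next
    case True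
    thus ?thesis using parent_in_V depth_eq_Suc_depth_parent Suc[of y] Suc[of "p y"]
      by (auto simp: origin_Suc[of V r p rk \<omega> s y])
  qed
qed

lemma fresh_nodes_subset_level: "fresh \<omega> s \<subseteq> {y \<in> V. depth y = Suc s}"
proof
  fix y assume y: "y \<in> fresh \<omega> s"
  hence yV: "y \<in> V" "y \<noteq> r" and "orig \<omega> s y = None" "orig \<omega> s (p y) \<noteq> None"
    by (auto simp: fresh_nodes_def)
  hence "\<not> depth y \<le> s" "depth (p y) \<le> s"
    using origin_defined_iff[of \<omega> s y] origin_defined_iff[of \<omega> s "p y"] by auto
  thus "y \<in> {y \<in> V. depth y = Suc s}" using yV depth_eq_Suc_depth_parent[OF yV] by auto
qed

lemma finite_fresh_nodes: "finite (fresh \<omega> s)"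
  using fresh_nodes_subset_level finite_level[OF locally_finite] finite_subset by blast

lemma origin_Suc_cases:
  assumes "orig \<omega> (Suc s) y = Some L"
  obtains "y = r" "L = 0"
  | "y \<in> fresh \<omega> s" "L = cnt \<omega> s + card {w \<in> fresh \<omega> s. rk w < rk y}"
  | "y \<in> V" "y \<noteq> r" "orig \<omega> s (p y) = Some L \<or> orig \<omega> s y = Some L"
  using assms by (auto simp: origin_Suc fresh_nodes_def split: if_splits)

lemma card_ranks_below_mono:
  assumes "a \<in> fresh \<omega> s" "rk a < rk b"
  shows "card {w \<in> fresh \<omega> s. rk w < rk a} < card {w \<in> fresh \<omega> s. rk w < rk b}"
  using assms finite_fresh_nodes by (intro psubset_card_mono) auto

lemma origin_less_counter: "orig \<omega> s y = Some L \<Longrightarrow> L < cnt \<omega> s"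
proof (induction s arbitrary: y L)
  case 0 thus ?case by (simp add: origin_0 split: if_splits)
next
  case (Suc s)
  have mono: "cnt \<omega> s \<le> cnt \<omega> (Suc s)" by (rule counter_mono) simp
  from Suc.prems show ?case
  proof (cases rule: origin_Suc_cases)
    case 1 thus ?thesis using counter_pos[of V r p rk \<omega> "Suc s"] by simp
  next
    case 2
    have "card {w \<in> fresh \<omega> s. rk w < rk y} < card (fresh \<omega> s)"
      using 2(1) finite_fresh_nodes by (intro psubset_card_mono) auto
    thus ?thesis using 2(2) counter_Suc[of V r p rk \<omega> s] by simp
  next
    case 3 thus ?thesis using Suc.IH mono by fastforce
  qed
qed

lemma fresh_origin_inj:
  assumes "a \<in> fresh \<omega> s" "y \<in> fresh \<omega> s" "orig \<omega> (Suc s) a = orig \<omega> (Suc s) y"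
  shows "a = y"
proof (rule ccontr)
  assume "a \<noteq> y"
  moreover have "a \<in> V" "y \<in> V" using assms(1,2) by (auto simp: fresh_nodes_def)
  ultimately have "rk a < rk y \<or> rk y < rk a"
    using inj_rk by (metis inj_onD linorder_neqE_nat)
  moreover have "orig \<omega> (Suc s) x = Some (cnt \<omega> s + card {w \<in> fresh \<omega> s. rk w < rk x})"
    if "x \<in> fresh \<omega> s" for x
    using that by (auto simp: origin_Suc fresh_nodes_def)
  ultimately show False
    using assms card_ranks_below_mono[OF assms(1)] card_ranks_below_mono[OF assms(2)] by fastforce
qed

lemma fresh_origin_ge_counter:
  assumes "a \<in> fresh \<omega> s" "orig \<omega> (Suc s) a = Some L"
  shows "cnt \<omega> s \<le> L"
  using assms by (auto simp: origin_Suc fresh_nodes_def)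

lemma fresh_origin_descendants:
  assumes a: "a \<in> fresh \<omega> s0" and L: "orig \<omega> (Suc s0) a = Some L"
  shows "Suc s0 \<le> s \<Longrightarrow> orig \<omega> s y = Some L \<Longrightarrow> y \<in> V \<and> tanc p r a y"
proof (induction s arbitrary: y rule: dec_induct)
  have L_ge: "cnt \<omega> s0 \<le> L" using fresh_origin_ge_counter[OF a L] .
  hence L_pos: "L \<noteq> 0" using counter_pos[of V r p rk \<omega> s0] by linarith
  {
    case base
    thus ?case
    proof (cases rule: origin_Suc_cases)
      case 2
      hence "y = a" using fresh_origin_inj[OF a] base L by simp
      thus ?thesis using a tanc_refl by (simp add: fresh_nodes_def)
    next
      case 3 thus ?thesis using origin_less_counter L_ge by fastforce
    qed (use L_pos in simp)
  next
    case (step s)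
    have "L < cnt \<omega> (Suc s0)" using origin_less_counter[OF L] .
    hence L_less: "L < cnt \<omega> s" using counter_mono[OF step.hyps(1), of V r p rk \<omega>] by linarith
    from step.prems show ?case
    proof (cases rule: origin_Suc_cases)
      case 2 thus ?thesis using L_less by simp
    next
      case 3 thus ?thesis using step.IH tanc_parent by blast
    qed (use L_pos in simp)
  }
qed

end

section \<open>Lineages of origins\<close>

text \<open>\<open>lineage_above p r D \<omega> s x\<close>: following the origin of \<open>x\<close> at time \<open>s\<close> back through the
  copy steps that produced it, one reaches depth \<open>D\<close> without meeting a fresh origin. The
  definition only reads the coins, not the state of the process.\<close>

fun lineage_above ::
    "(nat \<Rightarrow> nat) \<Rightarrow> nat \<Rightarrow> nat \<Rightarrow> (nat \<times> nat \<Rightarrow> bool \<times> bool) \<Rightarrow> nat \<Rightarrow> nat \<Rightarrow> bool" where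
  "lineage_above p r D \<omega> 0 x = True"
| "lineage_above p r D \<omega> (Suc s) x = (tdepth p r x \<le> D \<or>
     (if tdepth p r x = Suc s then \<not> fst (\<omega> (s, x)) \<and> lineage_above p r D \<omega> s (p x)
      else if snd (\<omega> (s, x)) then lineage_above p r D \<omega> s (p x) else lineage_above p r D \<omega> s x))"

context decoupled_process
begin

lemma fresh_ancestor_if_not_lineage_above:
  "x \<in> V \<Longrightarrow> depth x \<le> s \<Longrightarrow> \<not> lineage_above p r D \<omega> s x \<Longrightarrow>
   \<exists>a s0. a \<in> fresh \<omega> s0 \<and> D < depth a \<and> Suc s0 \<le> s \<and> tanc p r a x \<and> orig \<omega> s x = orig \<omega> (Suc s0) a"
proof (induction s arbitrary: x)
  case 0 thus ?case by simp
next
  case (Suc s)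
  have D_less: "D < depth x" using Suc.prems by auto
  hence xr: "x \<noteq> r" using tdepth_root by auto
  note px = parent_in_V[OF Suc.prems(1) xr] depth_eq_Suc_depth_parent[OF Suc.prems(1) xr]
  have from_parent: "?case" if "orig \<omega> (Suc s) x = orig \<omega> s (p x)" "\<not> lineage_above p r D \<omega> s (p x)"
    using Suc.IH[OF px(1) _ that(2)] that(1) Suc.prems(2) px(2) tanc_parent[OF Suc.prems(1) xr]
    by (metis le_SucI Suc_le_mono)
  show ?case
  proof (cases "depth x = Suc s")
    case True
    hence unborn: "orig \<omega> s x = None" "orig \<omega> s (p x) \<noteq> None"
      using origin_defined_iff[of \<omega> s x] origin_defined_iff[of \<omega> s "p x"] px by auto
    show ?thesis
    proof (cases "fst (\<omega> (s, x))")
      case True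
      hence "x \<in> fresh \<omega> s" using unborn Suc.prems(1) xr by (simp add: fresh_nodes_def)
      thus ?thesis using D_less tanc_refl by blast
    next
      case False
      have "orig \<omega> (Suc s) x = orig \<omega> s (p x)"
        using False Suc.prems(1) xr unborn by (simp add: origin_Suc)
      moreover have "\<not> lineage_above p r D \<omega> s (p x)"
        using False Suc.prems(3) \<open>depth x = Suc s\<close> by simp
      ultimately show ?thesis by (rule from_parent)
    qed
  next
    case False
    hence le: "depth x \<le> s" using Suc.prems by simp
    have born: "orig \<omega> s x \<noteq> None" using origin_defined_iff le Suc.prems(1) by simp
    show ?thesis
    proof (cases "snd (\<omega> (s, x))")
      case True
      have "orig \<omega> (Suc s) x = orig \<omega> s (p x)"
        using True Suc.prems(1) xr born by (auto simp: origin_Suc)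
      moreover have "\<not> lineage_above p r D \<omega> s (p x)"
        using True False Suc.prems(3) by simp
      ultimately show ?thesis by (rule from_parent)
    next
      case snd: False
      hence "\<not> lineage_above p r D \<omega> s x" "orig \<omega> (Suc s) x = orig \<omega> s x"
        using Suc.prems False born xr by (auto simp: origin_Suc)
      thus ?thesis using Suc.IH[OF Suc.prems(1) le] by (metis le_SucI)
    qed
  qed
qed

lemma lineage_above_if_same_run:
  assumes uV: "u \<in> V" and du: "depth u \<le> t" and wv: "tanc p r w v"
    and lca: "\<forall>w'\<in>V. tanc p r w' u \<and> tanc p r w' v \<longrightarrow> depth w' \<le> depth w"
    and same: "orig \<omega> t u = orig \<omega> t v"
  shows "lineage_above p r (depth w) \<omega> t u"
proof (rule ccontr)
  assume "\<not> lineage_above p r (depth w) \<omega> t u"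
  then obtain a s0 where a: "a \<in> fresh \<omega> s0" "depth w < depth a" "Suc s0 \<le> t" "tanc p r a u"
    "orig \<omega> t u = orig \<omega> (Suc s0) a"
    using fresh_ancestor_if_not_lineage_above[OF uV du] by blast
  have "a \<in> V" "depth a = Suc s0" using a(1) fresh_nodes_subset_level by auto
  then obtain L where L: "orig \<omega> (Suc s0) a = Some L"
    using origin_defined_iff[of \<omega> "Suc s0" a] by auto
  hence "tanc p r a v" using fresh_origin_descendants[OF a(1) L a(3)] a(5) same by simp
  thus False using lca a \<open>a \<in> V\<close> by fastforce
qed

end

section \<open>Probability of a lineage from above\<close>

lemma measure_PiM_pmf_coordinate_indep:
  fixes N :: "'b pmf" and i :: 'i and Q :: "'b \<Rightarrow> bool"
  assumes iJ: "i \<notin> J" and G: "G \<in> measurable (PiM J (\<lambda>_. measure_pmf N)) (count_space UNIV)"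
  defines "P \<equiv> PiM UNIV (\<lambda>_. measure_pmf N)"
  shows "measure P {\<omega> \<in> space P. Q (\<omega> i) \<and> G (restrict \<omega> J)}
     = measure_pmf.prob N {c. Q c} * measure P {\<omega> \<in> space P. G (restrict \<omega> J)}"
proof -
  let ?M = "measure_pmf N"
  interpret product_prob_space "\<lambda>_. ?M" UNIV
    by (simp add: product_prob_space_def product_sigma_finite_def product_prob_space_axioms_def
        measure_pmf.prob_space_axioms prob_space_imp_sigma_finite)
  have "indep_vars (\<lambda>_. ?M) (\<lambda>i \<omega>. \<omega> i) UNIV"
    by (subst indep_vars_iff_distr_eq_PiM) (auto simp: PiM_component distr_id2 restrict_UNIV)
  hence indep: "indep_var (PiM {i} (\<lambda>_. ?M)) (\<lambda>\<omega>. restrict \<omega> {i}) (PiM J (\<lambda>_. ?M)) (\<lambda>\<omega>. restrict \<omega> J)"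
    using iJ by (intro indep_var_restrict) auto
  let ?A = "{f \<in> space (PiM {i} (\<lambda>_. ?M)). Q (f i)}"
  let ?B = "{f \<in> space (PiM J (\<lambda>_. ?M)). G f}"
  have "Measurable.pred (PiM {i} (\<lambda>_. ?M)) (\<lambda>f. Q (f i))"
    by (rule measurable_compose[OF measurable_component_singleton[of i "{i}"]]) simp_all
  hence "?A \<in> sets (PiM {i} (\<lambda>_. ?M))" by measurable
  moreover have "?B \<in> sets (PiM J (\<lambda>_. ?M))" using G by measurable
  ultimately have "prob ((\<lambda>\<omega>. (restrict \<omega> {i}, restrict \<omega> J)) -` (?A \<times> ?B) \<inter> space P)
     = prob ((\<lambda>\<omega>. restrict \<omega> {i}) -` ?A \<inter> space P) * prob ((\<lambda>\<omega>. restrict \<omega> J) -` ?B \<inter> space P)"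
    using indep_varD[OF indep] unfolding P_def by simp
  moreover have "(\<lambda>\<omega>. (restrict \<omega> {i}, restrict \<omega> J)) -` (?A \<times> ?B) \<inter> space P
     = {\<omega> \<in> space P. Q (\<omega> i) \<and> G (restrict \<omega> J)}"
    by (auto simp: P_def space_PiM)
  moreover have "(\<lambda>\<omega>. restrict \<omega> J) -` ?B \<inter> space P = {\<omega> \<in> space P. G (restrict \<omega> J)}"
    by (auto simp: P_def space_PiM)
  moreover have "(\<lambda>\<omega>. restrict \<omega> {i}) -` ?A \<inter> space P = {\<omega> \<in> space P. \<omega> i \<in> {c. Q c}}"
    by (auto simp: P_def space_PiM)
  moreover have "prob {\<omega> \<in> space P. \<omega> i \<in> {c. Q c}} = measure_pmf.prob N {c. Q c}"
    using emeasure_PiM_Collect_single[of i "{c. Q c}"]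
    by (simp add: P_def emeasure_eq_measure measure_pmf.emeasure_eq_measure)
  ultimately show ?thesis by (simp add: P_def)
qed

abbreviation coin_pmf :: "real \<Rightarrow> real \<Rightarrow> (bool \<times> bool) pmf" where
  "coin_pmf \<alpha> \<beta> \<equiv> pair_pmf (bernoulli_pmf \<alpha>) (bernoulli_pmf \<beta>)"

lemma coin_space_eq: "coin_space \<alpha> \<beta> = PiM UNIV (\<lambda>_. measure_pmf (coin_pmf \<alpha> \<beta>))"
  by (simp add: coin_space_def)

lemma prob_space_coin_space: "prob_space (coin_space \<alpha> \<beta>)"
  unfolding coin_space_def by (intro prob_space_PiM measure_pmf.prob_space_axioms)

lemma measure_coin_not_fst:
  "0 \<le> \<alpha> \<Longrightarrow> \<alpha> \<le> 1 \<Longrightarrow> measure_pmf.prob (coin_pmf \<alpha> \<beta>) {c. \<not> fst c} = 1 - \<alpha>"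
  using measure_map_pmf[of fst "coin_pmf \<alpha> \<beta>" "{False}"]
  by (simp add: vimage_def map_fst_pair_pmf measure_pmf_single)

lemma measure_coin_snd:
  "0 \<le> \<beta> \<Longrightarrow> \<beta> \<le> 1 \<Longrightarrow> measure_pmf.prob (coin_pmf \<alpha> \<beta>) {c. snd c} = \<beta>"
  using measure_map_pmf[of snd "coin_pmf \<alpha> \<beta>" "{True}"]
  by (simp add: vimage_def map_snd_pair_pmf measure_pmf_single)

lemma measure_coin_not_snd:
  "0 \<le> \<beta> \<Longrightarrow> \<beta> \<le> 1 \<Longrightarrow> measure_pmf.prob (coin_pmf \<alpha> \<beta>) {c. \<not> snd c} = 1 - \<beta>"
  using measure_map_pmf[of snd "coin_pmf \<alpha> \<beta>" "{False}"]
  by (simp add: vimage_def map_snd_pair_pmf measure_pmf_single)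

lemma lineage_above_cong:
  "(\<And>i y. i < s \<Longrightarrow> \<omega> (i, y) = \<omega>' (i, y)) \<Longrightarrow> lineage_above p r D \<omega> s x = lineage_above p r D \<omega>' s x"
proof (induction s arbitrary: x)
  case (Suc s)
  hence "\<omega> (s, x) = \<omega>' (s, x)" "\<And>y. lineage_above p r D \<omega> s y = lineage_above p r D \<omega>' s y" by simp_all
  thus ?case by (simp only: lineage_above.simps)
qed simp

lemma lineage_above_restrict:
  "{(i, y). i < s} \<subseteq> J \<Longrightarrow> lineage_above p r D (restrict \<omega> J) s x = lineage_above p r D \<omega> s x"
  by (rule lineage_above_cong) auto

lemma measurable_lineage_above:
  fixes N :: "(bool \<times> bool) pmf"
  assumes "{(i, y). i < s} \<subseteq> J"
  shows "(\<lambda>\<omega>. lineage_above p r D \<omega> s x) \<in> measurable (PiM J (\<lambda>_. measure_pmf N)) (count_space UNIV)"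
  using assms
proof (induction s arbitrary: x)
  case 0 thus ?case by simp
next
  case (Suc s)
  have J: "{(i, y). i < s} \<subseteq> J" "(s, x) \<in> J" using Suc.prems by auto
  have coin: "(\<lambda>\<omega>. \<omega> (s, x)) \<in> measurable (PiM J (\<lambda>_. measure_pmf N)) (measure_pmf N)"
    using J(2) by (rule measurable_component_singleton)
  have "Measurable.pred (PiM J (\<lambda>_. measure_pmf N)) (\<lambda>\<omega>. fst (\<omega> (s, x)))"
    "Measurable.pred (PiM J (\<lambda>_. measure_pmf N)) (\<lambda>\<omega>. snd (\<omega> (s, x)))"
    by (rule measurable_compose[OF coin], simp)+
  thus ?case using Suc.IH[OF J(1), of x] Suc.IH[OF J(1), of "p x"]
    by (simp add: pred_intros_logic measurable_If)
qed

lemma pred_lineage_above: "Measurable.pred (coin_space \<alpha> \<beta>) (\<lambda>\<omega>. lineage_above p r D \<omega> s x)"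
  unfolding coin_space_def by (rule measurable_lineage_above) simp

lemma measure_coin_and_lineage_above:
  "measure (coin_space \<alpha> \<beta>) {\<omega> \<in> space (coin_space \<alpha> \<beta>). Q (\<omega> (s, x)) \<and> lineage_above p r D \<omega> s y}
   = measure_pmf.prob (coin_pmf \<alpha> \<beta>) {c. Q c}
     * measure (coin_space \<alpha> \<beta>) {\<omega> \<in> space (coin_space \<alpha> \<beta>). lineage_above p r D \<omega> s y}"
  using measure_PiM_pmf_coordinate_indep[of "(s, x)" "{(i, y). i < s}"
      "\<lambda>\<omega>. lineage_above p r D \<omega> s y" "coin_pmf \<alpha> \<beta>" Q]
  by (simp add: measurable_lineage_above lineage_above_restrict coin_space_eq)

text \<open>The potential \<open>q ^ (depth x - D) * M ^ (s - depth x)\<close> is a supermartingale along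
  the recursion of \<open>lineage_above\<close>: a node is born without a fresh origin with probability
  \<open>1 - \<alpha> \<le> q\<close>, and the choice between copying (probability \<open>\<beta>\<close>, depth gap shrinks by one) and
  keeping (depth gap unchanged) costs at most a factor \<open>M\<close> by \<open>\<beta> M + (1 - \<beta>) q \<le> q M\<close>.\<close>

lemma (in bfs_spanning_tree) measure_lineage_above_le:
  fixes \<alpha> \<beta> q M :: real
  assumes \<alpha>: "0 \<le> \<alpha>" "\<alpha> \<le> 1" and \<beta>: "0 \<le> \<beta>" "\<beta> \<le> 1"
    and q: "0 < q" "1 - \<alpha> \<le> q" and M: "1 \<le> M" "\<beta> * M + (1 - \<beta>) * q \<le> q * M"
  shows "x \<in> V \<Longrightarrow> depth x \<le> s \<Longrightarrow>
    measure (coin_space \<alpha> \<beta>) {\<omega> \<in> space (coin_space \<alpha> \<beta>). lineage_above p r D \<omega> s x}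
      \<le> q ^ (depth x - D) * M ^ (s - depth x)"
proof (induction s arbitrary: x)
  let ?P = "coin_space \<alpha> \<beta>"
  let ?L = "\<lambda>s x. {\<omega> \<in> space ?P. lineage_above p r D \<omega> s x}"
  interpret P: prob_space ?P by (rule prob_space_coin_space)
  {
    case 0
    thus ?case using P.prob_le_1 by simp
  next
    case (Suc s)
    show ?case
    proof (cases "depth x \<le> D")
      case True
      moreover have "1 \<le> M ^ (Suc s - depth x)" using M by simp
      ultimately show ?thesis using P.prob_space by simp
    next
      case False
      hence xr: "x \<noteq> r" using tdepth_root by auto
      note px = parent_in_V[OF Suc.prems(1) xr] depth_eq_Suc_depth_parent[OF Suc.prems(1) xr]
      define k where "k = depth (p x) - D"
      have k: "depth x - D = Suc k" using False px(2) unfolding k_def by simp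
      show ?thesis
      proof (cases "depth x = Suc s")
        case True
        have "?L (Suc s) x = {\<omega> \<in> space ?P. \<not> fst (\<omega> (s, x)) \<and> lineage_above p r D \<omega> s (p x)}"
          using True False by auto
        hence "measure ?P (?L (Suc s) x) = (1 - \<alpha>) * measure ?P (?L s (p x))"
          using measure_coin_and_lineage_above[of \<alpha> \<beta> "\<lambda>c. \<not> fst c"] measure_coin_not_fst[OF \<alpha>]
          by simp
        also have "\<dots> \<le> (1 - \<alpha>) * q ^ k"
          using Suc.IH[OF px(1)] px(2) True \<alpha> unfolding k_def by (intro mult_left_mono) auto
        also have "\<dots> \<le> q ^ Suc k" using q by (simp add: mult_right_mono)
        finally show ?thesis using k True by simp
      next
        case not_born: False
        hence le: "depth x \<le> s" using Suc.prems by simp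
        define g where "g = s - depth x"
        have g: "Suc s - depth x = Suc g" "s - depth (p x) = Suc g" using le px(2) unfolding g_def by auto
        let ?copy = "{\<omega> \<in> space ?P. snd (\<omega> (s, x)) \<and> lineage_above p r D \<omega> s (p x)}"
        let ?keep = "{\<omega> \<in> space ?P. \<not> snd (\<omega> (s, x)) \<and> lineage_above p r D \<omega> s x}"
        have "Measurable.pred ?P (\<lambda>\<omega>. snd (\<omega> (s, x)))"
          unfolding coin_space_def
          by (rule measurable_compose[OF measurable_component_singleton]) simp_all
        hence "?copy \<in> P.events" "?keep \<in> P.events" using pred_lineage_above by measurable
        moreover have "?L (Suc s) x = ?copy \<union> ?keep" using not_born False by auto
        ultimately have "measure ?P (?L (Suc s) x) = measure ?P ?copy + measure ?P ?keep"
          by (simp add: P.finite_measure_Union disjoint_iff)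
        also have "\<dots> = \<beta> * measure ?P (?L s (p x)) + (1 - \<beta>) * measure ?P (?L s x)"
          using measure_coin_and_lineage_above[of \<alpha> \<beta> snd] measure_coin_snd[OF \<beta>]
            measure_coin_and_lineage_above[of \<alpha> \<beta> "\<lambda>c. \<not> snd c"] measure_coin_not_snd[OF \<beta>]
          by simp
        also have "\<dots> \<le> \<beta> * (q ^ k * M ^ Suc g) + (1 - \<beta>) * (q ^ Suc k * M ^ g)"
          using Suc.IH[OF px(1)] Suc.IH[OF Suc.prems(1) le] px(2) le k g \<beta>
          unfolding k_def g_def by (intro add_mono mult_left_mono) auto
        also have "\<dots> = (q ^ k * M ^ g) * (\<beta> * M + (1 - \<beta>) * q)" by (simp add: algebra_simps)
        also have "\<dots> \<le> (q ^ k * M ^ g) * (q * M)" using M q by (intro mult_left_mono) auto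
        also have "\<dots> = q ^ Suc k * M ^ Suc g" by (simp add: algebra_simps)
        finally show ?thesis using k g by simp
      qed
    qed
  }
qed

section \<open>Choice of the potential\<close>

lemma drift_weights:
  fixes \<alpha> \<beta> e :: real
  assumes \<alpha>: "\<alpha> \<le> 1" and \<beta>: "0 < \<beta>" "\<beta> < 1" and e: "0 < e" "e \<le> \<alpha>" "e \<le> (1 - \<beta>) / 2"
  defines "b \<equiv> \<beta> / (1 - \<beta>)" and "q \<equiv> 1 / (1 + e)" and "M \<equiv> 1 / (1 - \<beta> / (1 - \<beta>) * e)"
  shows "0 < q" "1 - \<alpha> \<le> q" "1 \<le> M" "\<beta> * M + (1 - \<beta>) * q \<le> q * M"
    and "q ^ n * M ^ m \<le> exp (- e * (real n - real m * b) + e\<^sup>2 * (real n + 2 * b\<^sup>2 * real m))"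
proof -
  have b: "0 < b" "(1 - \<beta>) * b = \<beta>" using \<beta> unfolding b_def by simp_all
  have be: "0 \<le> b * e" "b * e \<le> 1/2"
  proof -
    have "b * e \<le> b * ((1 - \<beta>) / 2)" using e b by (simp add: mult_left_mono)
    also have "\<dots> = \<beta> / 2" using b by (simp add: algebra_simps)
    finally show "b * e \<le> 1/2" using \<beta> by linarith
    show "0 \<le> b * e" using b e by simp
  qed
  show q0: "0 < q" using e unfolding q_def by simp
  show "1 \<le> M" using be unfolding M_def b_def[symmetric] by simp
  hence M0: "0 < M" by simp
  have "(1 - \<alpha>) * (1 + e) \<le> (1 - \<alpha>) * (1 + \<alpha>)" using e \<alpha> by (intro mult_left_mono) auto
  also have "\<dots> \<le> 1" by (simp add: algebra_simps)
  finally show "1 - \<alpha> \<le> q" using e unfolding q_def by (simp add: field_simps)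
  have "(1 - \<beta>) * (b * e) = \<beta> * e" using b(2) by (simp add: mult.assoc[symmetric])
  moreover have "\<beta> * (1 + e) + (1 - \<beta>) * (1 - b * e) = 1 + \<beta> * e - (1 - \<beta>) * (b * e)"
    by (simp add: algebra_simps)
  ultimately have "\<beta> * (1 + e) + (1 - \<beta>) * (1 - b * e) = 1" by linarith
  moreover have "1 + e \<noteq> 0" "1 - b * e \<noteq> 0" using e be by auto
  ultimately show "\<beta> * M + (1 - \<beta>) * q \<le> q * M"
    unfolding q_def M_def b_def[symmetric] by (simp add: field_simps)
  have "ln q \<le> - (e - e\<^sup>2)"
    using ln_one_plus_pos_lower_bound[of e] e \<beta> unfolding q_def by (simp add: ln_div)
  moreover have "ln M \<le> b * e + 2 * (b * e)\<^sup>2"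
    using ln_one_minus_pos_lower_bound[of "b * e"] be unfolding M_def b_def[symmetric] by (simp add: ln_div)
  ultimately have "real n * ln q + real m * ln M \<le> real n * (- (e - e\<^sup>2)) + real m * (b * e + 2 * (b * e)\<^sup>2)"
    by (intro add_mono mult_left_mono) auto
  also have "\<dots> = - e * (real n - real m * b) + e\<^sup>2 * (real n + 2 * b\<^sup>2 * real m)"
    by (simp add: algebra_simps power2_eq_square)
  moreover have "q ^ n * M ^ m = exp (real n * ln q + real m * ln M)"
    using q0 M0 by (simp add: exp_add exp_of_nat_mult)
  ultimately show "q ^ n * M ^ m \<le> exp (- e * (real n - real m * b) + e\<^sup>2 * (real n + 2 * b\<^sup>2 * real m))"
    by simp
qed

lemma drift_exponent_le:
  fixes \<beta> \<eta> c s :: real and g n :: nat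
  assumes \<beta>: "0 < \<beta>" "\<beta> < 1" and \<eta>: "0 < \<eta>" and c: "c \<le> 1/2"
    and s: "s = real g + real n" "1 \<le> s"
  defines "b \<equiv> \<beta> / (1 - \<beta>)" and "e \<equiv> \<eta> * s powr (c - 1/2)"
  assumes gap: "real n > \<beta> * s + (1 + \<eta> * (1 + 2 * b\<^sup>2)) * s powr (1/2 + c)"
  shows "- e * (real n - real g * b) + e\<^sup>2 * (real n + 2 * b\<^sup>2 * real g) \<le> - \<eta> * s powr (2 * c)"
proof -
  define C where "C = 1 + 2 * b\<^sup>2"
  define X where "X = s powr (1/2 + c)"
  define Y where "Y = s powr (2 * c)"
  have eX: "e * X = \<eta> * Y"
    unfolding e_def X_def Y_def by (simp add: mult.assoc powr_add[symmetric])
  have "e\<^sup>2 * s = \<eta>\<^sup>2 * (s powr (c - 1/2) * s powr (c - 1/2) * s powr 1)"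
    using s unfolding e_def by (simp add: power2_eq_square)
  also have "\<dots> = \<eta>\<^sup>2 * Y" unfolding Y_def by (simp only: powr_add[symmetric]) simp
  finally have e2s: "e\<^sup>2 * s = \<eta>\<^sup>2 * Y" .
  have e0: "0 \<le> e" using \<eta> unfolding e_def by simp
  have b: "(1 - \<beta>) * b = \<beta>" using \<beta> unfolding b_def by simp
  have "(1 - \<beta>) * (real n - real g * b) = (1 - \<beta>) * real n - real g * ((1 - \<beta>) * b)"
    by (simp add: algebra_simps)
  also have "\<dots> = real n - \<beta> * s" unfolding b s(1) by (simp add: algebra_simps)
  finally have drift: "(1 - \<beta>) * (real n - real g * b) > (1 + \<eta> * C) * X"
    using gap unfolding C_def X_def by linarith
  moreover have "0 \<le> (1 + \<eta> * C) * X" using \<eta> unfolding C_def X_def by simp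
  ultimately have "0 < (1 - \<beta>) * (real n - real g * b)" by linarith
  hence "0 \<le> real n - real g * b" using \<beta> by (simp add: zero_less_mult_iff)
  hence "(1 - \<beta>) * (real n - real g * b) \<le> real n - real g * b"
    using \<beta> by (intro mult_left_le_one_le) auto
  hence "(1 + \<eta> * C) * X \<le> real n - real g * b" using drift by linarith
  hence "- e * (real n - real g * b) \<le> - e * ((1 + \<eta> * C) * X)"
    using e0 by (simp add: mult_left_mono)
  moreover have "real n + 2 * b\<^sup>2 * real g \<le> C * s" unfolding C_def s(1) by (simp add: algebra_simps)
  hence "e\<^sup>2 * (real n + 2 * b\<^sup>2 * real g) \<le> e\<^sup>2 * (C * s)" by (simp add: mult_left_mono)
  ultimately have "- e * (real n - real g * b) + e\<^sup>2 * (real n + 2 * b\<^sup>2 * real g)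
      \<le> - (1 + \<eta> * C) * (e * X) + C * (e\<^sup>2 * s)"
    by (simp add: algebra_simps)
  also have "\<dots> = - \<eta> * Y" unfolding eX e2s by (simp add: algebra_simps power2_eq_square)
  finally show ?thesis unfolding Y_def .
qed

lemma drift_weights_for_gap:
  fixes \<alpha> \<beta> \<eta> c s :: real and g n :: nat
  assumes \<alpha>: "\<alpha> \<le> 1" and \<beta>: "0 < \<beta>" "\<beta> < 1"
    and \<eta>: "0 < \<eta>" "\<eta> \<le> \<alpha>" "\<eta> \<le> (1 - \<beta>) / 2" and c: "c \<le> 1/2"
    and s: "s = real g + real n" "1 \<le> s"
    and gap: "real n > \<beta> * s + (1 + \<eta> * (1 + 2 * (\<beta> / (1 - \<beta>))\<^sup>2)) * s powr (1/2 + c)"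
  shows "\<exists>q M. 0 < q \<and> 1 - \<alpha> \<le> q \<and> 1 \<le> M \<and> \<beta> * M + (1 - \<beta>) * q \<le> q * M \<and>
           q ^ n * M ^ g \<le> exp (- \<eta> * s powr (2 * c))"
proof -
  define e where "e = \<eta> * s powr (c - 1/2)"
  have "s powr (c - 1/2) \<le> s powr 0" using s c by (intro powr_mono) auto
  hence "e \<le> \<eta>" using s \<eta> unfolding e_def by (simp add: mult_left_le)
  moreover have "0 < e" using s \<eta> unfolding e_def by simp
  ultimately have e: "0 < e" "e \<le> \<alpha>" "e \<le> (1 - \<beta>) / 2" using \<eta> by linarith+
  note w = drift_weights[OF \<alpha> \<beta> e]
  have "- e * (real n - real g * (\<beta> / (1 - \<beta>))) + e\<^sup>2 * (real n + 2 * (\<beta> / (1 - \<beta>))\<^sup>2 * real g)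
      \<le> - \<eta> * s powr (2 * c)"
    using drift_exponent_le[OF \<beta> \<eta>(1) c s gap] unfolding e_def .
  thus ?thesis using w(1-4) order_trans[OF w(5)[of n g]] by blast
qed

context decoupled_process
begin

lemma measure_same_run_le:
  fixes \<alpha> \<beta> \<eta> c :: real
  assumes \<alpha>: "0 \<le> \<alpha>" "\<alpha> \<le> 1" and \<beta>: "0 < \<beta>" "\<beta> < 1"
    and \<eta>: "0 < \<eta>" "\<eta> \<le> \<alpha>" "\<eta> \<le> (1 - \<beta>) / 2" and c: "c \<le> 1/2"
    and uV: "u \<in> V" and du: "depth u \<le> t" and wu: "tanc p r w u" and wv: "tanc p r w v"
    and lca: "\<forall>w'\<in>V. tanc p r w' u \<and> tanc p r w' v \<longrightarrow> depth w' \<le> depth w"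
    and s: "1 \<le> real t - real (depth w)"
    and gap: "real (depth u - depth w) > \<beta> * (real t - real (depth w))
      + (1 + \<eta> * (1 + 2 * (\<beta> / (1 - \<beta>))\<^sup>2)) * (real t - real (depth w)) powr (1/2 + c)"
  shows "measure (coin_space \<alpha> \<beta>) {\<omega> \<in> space (coin_space \<alpha> \<beta>). orig \<omega> t u = orig \<omega> t v}
    \<le> exp (- \<eta> * (real t - real (depth w)) powr (2 * c))"
proof -
  let ?P = "coin_space \<alpha> \<beta>"
  interpret P: prob_space ?P by (rule prob_space_coin_space)
  have wu_le: "depth w \<le> depth u" using tanc_depth_le[OF uV wu] .
  have "real t - real (depth w) = real (t - depth u) + real (depth u - depth w)"
    using wu_le du by simp
  then obtain q M where qM: "0 < q" "1 - \<alpha> \<le> q" "1 \<le> M" "\<beta> * M + (1 - \<beta>) * q \<le> q * M"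
    "q ^ (depth u - depth w) * M ^ (t - depth u) \<le> exp (- \<eta> * (real t - real (depth w)) powr (2 * c))"
    using drift_weights_for_gap[OF \<alpha>(2) \<beta> \<eta> c _ s gap] by blast
  have "{\<omega> \<in> space ?P. orig \<omega> t u = orig \<omega> t v} \<subseteq> {\<omega> \<in> space ?P. lineage_above p r (depth w) \<omega> t u}"
    using lineage_above_if_same_run[OF uV du wv lca] by blast
  hence "measure ?P {\<omega> \<in> space ?P. orig \<omega> t u = orig \<omega> t v}
      \<le> measure ?P {\<omega> \<in> space ?P. lineage_above p r (depth w) \<omega> t u}"
    using pred_lineage_above by (intro P.finite_measure_mono) (auto simp: pred_def)
  also have "\<dots> \<le> q ^ (depth u - depth w) * M ^ (t - depth u)"
    using measure_lineage_above_le[OF \<alpha> _ _ qM(1-4) uV du] \<beta> by simp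
  finally show ?thesis using qM(5) by linarith
qed

text \<open>The gap hypothesis forces \<open>t > depth w\<close>; for \<open>t - depth w \<ge> 1\<close> a smaller exponent
  \<open>c\<close> only weakens it, which lets us assume \<open>c \<le> 1/2\<close>.\<close>

lemma measure_same_run_le_max:
  fixes \<alpha> \<beta> \<eta> c :: real
  assumes \<alpha>: "0 \<le> \<alpha>" "\<alpha> \<le> 1" and \<beta>: "0 < \<beta>" "\<beta> < 1"
    and \<eta>: "0 < \<eta>" "\<eta> \<le> \<alpha>" "\<eta> \<le> (1 - \<beta>) / 2" and c: "0 < c"
    and uV: "u \<in> V" and vV: "v \<in> V" and du: "depth u \<le> t" and dv: "depth v \<le> t"
    and wu: "tanc p r w u" and wv: "tanc p r w v"
    and lca: "\<forall>w'\<in>V. tanc p r w' u \<and> tanc p r w' v \<longrightarrow> depth w' \<le> depth w"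
    and gap: "real (max (depth u - depth w) (depth v - depth w)) > \<beta> * (real t - real (depth w))
      + (1 + \<eta> * (1 + 2 * (\<beta> / (1 - \<beta>))\<^sup>2)) * (real t - real (depth w)) powr (1/2 + c)"
  shows "measure (coin_space \<alpha> \<beta>) {\<omega> \<in> space (coin_space \<alpha> \<beta>). orig \<omega> t u = orig \<omega> t v}
    \<le> exp (- \<eta> * (real t - real (depth w)) powr (2 * min c (1/2)))"
proof -
  let ?s = "real t - real (depth w)"
  let ?K = "1 + \<eta> * (1 + 2 * (\<beta> / (1 - \<beta>))\<^sup>2)"
  have wu_le: "depth w \<le> depth u" and wv_le: "depth w \<le> depth v"
    using tanc_depth_le[OF uV wu] tanc_depth_le[OF vV wv] .
  have s: "1 \<le> ?s"
  proof (rule ccontr)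
    assume "\<not> 1 \<le> ?s"
    hence "t = depth w" using wu_le du by linarith
    thus False using gap wu_le wv_le du dv by simp
  qed
  have "?s powr (1/2 + min c (1/2)) \<le> ?s powr (1/2 + c)" using s by (intro powr_mono) auto
  moreover have "0 \<le> ?K" using \<eta> by simp
  ultimately have "?K * ?s powr (1/2 + min c (1/2)) \<le> ?K * ?s powr (1/2 + c)"
    by (rule mult_left_mono)
  hence gap': "real (max (depth u - depth w) (depth v - depth w))
      > \<beta> * ?s + ?K * ?s powr (1/2 + min c (1/2))"
    using gap by linarith
  note bound = measure_same_run_le[OF \<alpha> \<beta> \<eta> min.cobounded2]
  show ?thesis
  proof (cases "depth v - depth w \<le> depth u - depth w")
    case True
    thus ?thesis using bound[OF uV du wu wv lca s] gap' by (simp add: max_def)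
  next
    case False
    have "{\<omega> \<in> space (coin_space \<alpha> \<beta>). orig \<omega> t u = orig \<omega> t v}
        = {\<omega> \<in> space (coin_space \<alpha> \<beta>). orig \<omega> t v = orig \<omega> t u}" by auto
    thus ?thesis using bound[OF vV dv wv wu _ s] lca False gap' by (simp add: max_def conj_commute)
  qed
qed

end

theorem mainTheorem13:
  fixes \<alpha> \<beta> c :: real
  assumes "0 < \<alpha>" "\<alpha> < 1" "0 < \<beta>" "\<beta> < 1" "0 < c"
  shows "\<exists>K c1 c2 :: real. K > 0 \<and> c1 > 0 \<and> c2 > 0 \<and>
    (\<forall>(V::nat set) E r p (rk::nat \<Rightarrow> nat) (t::nat) u v w.
       ugraph V E \<and> locally_finite V E \<and> gconnected V E \<and> bfs_tree V E r p \<and>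
       inj_on rk V \<and> t > 0 \<and>
       u \<in> V \<and> v \<in> V \<and> gdist E r u \<le> t \<and> gdist E r v \<le> t \<and>
       w \<in> V \<and> tanc p r w u \<and> tanc p r w v \<and>
       (\<forall>w'\<in>V. tanc p r w' u \<and> tanc p r w' v \<longrightarrow> tdepth p r w' \<le> tdepth p r w) \<and>
       real (max (tdepth p r u - tdepth p r w) (tdepth p r v - tdepth p r w))
         > \<beta> * (real t - real (tdepth p r w))
           + K * (real t - real (tdepth p r w)) powr (1/2 + c)
     \<longrightarrow> measure (coin_space \<alpha> \<beta>)
           {\<omega> \<in> space (coin_space \<alpha> \<beta>). origin V r p rk \<omega> t u = origin V r p rk \<omega> t v}
         \<le> exp (- c1 * (real t - real (tdepth p r w)) powr c2))"
proof -
  define \<eta> where "\<eta> = min \<alpha> ((1 - \<beta>) / 2)"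
  have \<eta>: "0 < \<eta>" "\<eta> \<le> \<alpha>" "\<eta> \<le> (1 - \<beta>) / 2"
    using assms unfolding \<eta>_def by (simp_all add: min_def)
  have "0 < 1 + \<eta> * (1 + 2 * (\<beta> / (1 - \<beta>))\<^sup>2)" using \<eta>(1) by (simp add: add_pos_nonneg)
  show ?thesis
  proof (rule exI[of _ "1 + \<eta> * (1 + 2 * (\<beta> / (1 - \<beta>))\<^sup>2)"], rule exI[of _ \<eta>],
      rule exI[of _ "2 * min c (1/2)"], intro conjI allI impI)
    fix V :: "nat set" and E r p and rk :: "nat \<Rightarrow> nat" and t :: nat and u v w
    assume H: "ugraph V E \<and> locally_finite V E \<and> gconnected V E \<and> bfs_tree V E r p \<and>
       inj_on rk V \<and> t > 0 \<and> u \<in> V \<and> v \<in> V \<and> gdist E r u \<le> t \<and> gdist E r v \<le> t \<and>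
       w \<in> V \<and> tanc p r w u \<and> tanc p r w v \<and>
       (\<forall>w'\<in>V. tanc p r w' u \<and> tanc p r w' v \<longrightarrow> tdepth p r w' \<le> tdepth p r w) \<and>
       real (max (tdepth p r u - tdepth p r w) (tdepth p r v - tdepth p r w))
         > \<beta> * (real t - real (tdepth p r w))
           + (1 + \<eta> * (1 + 2 * (\<beta> / (1 - \<beta>))\<^sup>2)) * (real t - real (tdepth p r w)) powr (1/2 + c)"
    then interpret decoupled_process V E r p rk by unfold_locales auto
    show "measure (coin_space \<alpha> \<beta>)
        {\<omega> \<in> space (coin_space \<alpha> \<beta>). origin V r p rk \<omega> t u = origin V r p rk \<omega> t v}
      \<le> exp (- \<eta> * (real t - real (tdepth p r w)) powr (2 * min c (1/2)))"
      using measure_same_run_le_max[of \<alpha> \<beta> \<eta> c u v t w] H assms \<eta> depth_eq_gdist by auto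
  qed (use assms \<eta> \<open>0 < 1 + _\<close> in auto)
qed

end
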